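(* Let $C$ be a nonsingular affine curve over $\mathbb{R}$ with $C(\mathbb{R})$ compact and non-empty. Let $P_1,\dots,P_r\in C(\mathbb{R})$ and let $A=A(P_1,\dots,P_r)$ be the ring of all continuous functions $C(\mathbb{R})\to\mathbb{R}$ that are real analytic in suitable neighborhoods of $P_1,\dots,P_r$. Let $\varphi,\psi\in A$ be such that $\psi-\varphi$ is nonnegative on $C(\mathbb{R})$ and vanishes at most in $P_1,\dots,P_r$. Then there exists a regular function $p\in\mathbb{R}[C]$ with $\varphi\le p\le\psi$ on $C(\mathbb{R})$.
   Context: $C(\mathbb{R})$ carries its natural structure of a one-dimensional real analytic manifold. *)

theory Defs
  imports "HOL-Analysis.Analysis"
begin

text \<open>Real polynomial functions in the variables x_i (i :: 'n), viewed as
functions on complex affine space complex^'n (real coefficients).  Since the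
base field is infinite, this ring is the polynomial ring R[x_i | i :: 'n].\<close>

inductive_set rpoly :: "(complex^'n \<Rightarrow> complex) set" where
  const: "(\<lambda>z. complex_of_real c) \<in> rpoly"
| var: "(\<lambda>z. z $ i) \<in> rpoly"
| add: "f \<in> rpoly \<Longrightarrow> g \<in> rpoly \<Longrightarrow> (\<lambda>z. f z + g z) \<in> rpoly"
| mult: "f \<in> rpoly \<Longrightarrow> g \<in> rpoly \<Longrightarrow> (\<lambda>z. f z * g z) \<in> rpoly"

definition poly_ideal :: "(complex^'n \<Rightarrow> complex) set \<Rightarrow> bool" where
  "poly_ideal I \<longleftrightarrow> I \<subseteq> rpoly \<and> (\<lambda>z. 0) \<in> I \<and>
     (\<forall>f\<in>I. \<forall>g\<in>I. (\<lambda>z. f z + g z) \<in> I) \<and>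
     (\<forall>f\<in>I. \<forall>g\<in>rpoly. (\<lambda>z. g z * f z) \<in> I)"

definition prime_poly_ideal :: "(complex^'n \<Rightarrow> complex) set \<Rightarrow> bool" where
  "prime_poly_ideal I \<longleftrightarrow> poly_ideal I \<and> I \<noteq> rpoly \<and>
     (\<forall>f\<in>rpoly. \<forall>g\<in>rpoly. (\<lambda>z. f z * g z) \<in> I \<longrightarrow> f \<in> I \<or> g \<in> I)"

definition krull_dim_one :: "(complex^'n \<Rightarrow> complex) set \<Rightarrow> bool" where
  "krull_dim_one I \<longleftrightarrow>
     (\<exists>Q. prime_poly_ideal Q \<and> I \<subset> Q) \<and>
     \<not> (\<exists>Q0 Q1 Q2. prime_poly_ideal Q0 \<and> prime_poly_ideal Q1 \<and> prime_poly_ideal Q2 \<and>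
          I \<subseteq> Q0 \<and> Q0 \<subset> Q1 \<and> Q1 \<subset> Q2)"

definition cvar :: "(complex^'n \<Rightarrow> complex) set \<Rightarrow> (complex^'n) set" where
  "cvar I = {z. \<forall>f\<in>I. f z = 0}"

definition pdiff :: "(complex^'n \<Rightarrow> complex) \<Rightarrow> 'n \<Rightarrow> complex^'n \<Rightarrow> complex" where
  "pdiff f i z = deriv (\<lambda>w. f (\<chi> j. if j = i then w else z $ j)) (z $ i)"

definition grad :: "(complex^'n \<Rightarrow> complex) \<Rightarrow> complex^'n \<Rightarrow> complex^'n" where
  "grad f z = (\<chi> i. pdiff f i z)"

text \<open>Nonsingular affine curve over R given by its (prime) ideal I in R[x]:
I prime of Krull dimension one, and at every (complex) point of the variety
the Jacobian matrix of I has rank n - 1 (Jacobian criterion).\<close>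
definition nonsingular_affine_curve :: "(complex^'n \<Rightarrow> complex) set \<Rightarrow> bool" where
  "nonsingular_affine_curve I \<longleftrightarrow> prime_poly_ideal I \<and> krull_dim_one I \<and>
     (\<forall>z\<in>cvar I. vec.dim {grad f z | f. f \<in> I} = CARD('n) - 1)"

definition cmap :: "real^'n \<Rightarrow> complex^'n" where
  "cmap x = (\<chi> i. complex_of_real (x $ i))"

definition real_points :: "(complex^'n \<Rightarrow> complex) set \<Rightarrow> (real^'n) set" where
  "real_points I = {x. \<forall>f\<in>I. f (cmap x) = 0}"

text \<open>Regular functions R[C] = R[x]/I, as functions on C(R).\<close>
definition regular_fun :: "(complex^'n \<Rightarrow> complex) set \<Rightarrow> (real^'n \<Rightarrow> real) \<Rightarrow> bool" where
  "regular_fun I p \<longleftrightarrow> (\<exists>q\<in>rpoly. \<forall>x\<in>real_points I. p x = Re (q (cmap x)))"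

definition real_analytic_on :: "(real \<Rightarrow> real) \<Rightarrow> real set \<Rightarrow> bool" where
  "real_analytic_on f S \<longleftrightarrow> (\<forall>t\<in>S. \<exists>d>0. \<exists>a::nat \<Rightarrow> real.
      \<forall>s. \<bar>s - t\<bar> < d \<longrightarrow> (\<lambda>k. a k * (s - t) ^ k) sums f s)"

text \<open>Local analytic parametrization of X at P (inverse of an analytic chart of the
one-dimensional real analytic manifold X = C(R)).\<close>
definition analytic_param :: "(real^'n) set \<Rightarrow> real^'n \<Rightarrow> (real \<Rightarrow> real^'n) \<Rightarrow> real \<Rightarrow> bool" where
  "analytic_param X P \<gamma> e \<longleftrightarrow> e > 0 \<and> \<gamma> 0 = P \<and>
     (\<forall>i. real_analytic_on (\<lambda>t. \<gamma> t $ i) {-e<..<e}) \<and>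
     (\<forall>t\<in>{-e<..<e}. \<exists>v. v \<noteq> 0 \<and> (\<gamma> has_vector_derivative v) (at t)) \<and>
     \<gamma> ` {-e<..<e} \<subseteq> X \<and> openin (top_of_set X) (\<gamma> ` {-e<..<e}) \<and>
     (\<exists>g. homeomorphism {-e<..<e} (\<gamma> ` {-e<..<e}) \<gamma> g)"

definition analytic_near :: "(real^'n) set \<Rightarrow> (real^'n \<Rightarrow> real) \<Rightarrow> real^'n \<Rightarrow> bool" where
  "analytic_near X f P \<longleftrightarrow>
     (\<exists>\<gamma> e. analytic_param X P \<gamma> e \<and> real_analytic_on (f \<circ> \<gamma>) {-e<..<e})"

definition ringA :: "(real^'n) set \<Rightarrow> (real^'n) set \<Rightarrow> (real^'n \<Rightarrow> real) set" where
  "ringA X Ps = {f. continuous_on X f \<and> (\<forall>P\<in>Ps. analytic_near X f P)}"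

end

theory Submission
  imports Defs "HOL-Complex_Analysis.Complex_Analysis"
begin

text \<open>Near each P_i some coordinate x_j - (P_i)_j is a local analytic parameter of C(R), and
phi, psi are holomorphic functions of it. Hence psi - phi, whose zero set is finite, vanishes at
P_i to some finite order k_i, while phi agrees to any prescribed order with its Taylor polynomial
in that coordinate. Gluing these Taylor polynomials gives one polynomial h with
phi - h = O(|x - P_i|^(m+1)) at every P_i, where m >= k_i. For g = prod_i |x - P_i|^m the
quotient (phi - h) / g extends continuously by 0, and psi - phi >= delta g on the compact set
C(R). Stone-Weierstrass yields a polynomial q within delta/2 of (phi - h) / g + delta/2, and
then p = h + g q lies between phi and psi. Polynomial functions on R^n restrict to regular
functions.\<close>

section \<open>Polynomial functions are regular\<close>

lemma rpoly_sum: "(\<And>i. i \<in> A \<Longrightarrow> f i \<in> rpoly) \<Longrightarrow> (\<lambda>z. \<Sum>i\<in>A. f i z) \<in> rpoly"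
proof (induction A rule: infinite_finite_induct)
  case (infinite A)
  then show ?case using rpoly.const[of 0] by simp
next
  case empty
  then show ?case using rpoly.const[of 0] by simp
qed (auto intro: rpoly.add)

lemma rpoly_real_valued: "q \<in> rpoly \<Longrightarrow> Im (q (cmap x)) = 0"
  by (induction q rule: rpoly.induct) (auto simp: cmap_def)

lemma real_polynomial_function_imp_rpoly:
  fixes p :: "real^'n \<Rightarrow> real"
  assumes "real_polynomial_function p"
  shows "\<exists>q\<in>rpoly. \<forall>x. p x = Re (q (cmap x))"
  using assms
proof (induction p rule: real_polynomial_function.induct)
  case (linear f)
  interpret bounded_linear f by fact
  define q where "q = (\<lambda>z::complex^'n. \<Sum>i\<in>UNIV. z $ i * complex_of_real (f (axis i 1)))"
  have "f x = (\<Sum>i\<in>UNIV. x $ i * f (axis i 1))" for x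
    by (subst basis_expansion[of x, symmetric], simp only: scalar_mult_eq_scaleR) (simp add: sum scaleR)
  also have "\<dots> x = Re (q (cmap x))" for x
    by (simp add: q_def cmap_def Re_sum)
  finally have "\<forall>x. f x = Re (q (cmap x))" by blast
  moreover have "q \<in> rpoly"
    unfolding q_def by (intro rpoly_sum rpoly.mult rpoly.var rpoly.const)
  ultimately show ?case by blast
next
  case (const c)
  show ?case by (intro bexI[OF _ rpoly.const[of c]]) simp
next
  case (add f g)
  then show ?case by (auto intro!: bexI[OF _ rpoly.add])
next
  case (mult f g)
  then obtain q q' where q: "q \<in> rpoly" "\<forall>x. f x = Re (q (cmap x))"
    and q': "q' \<in> rpoly" "\<forall>x. g x = Re (q' (cmap x))"
    by blast
  show ?case
    by (rule bexI[OF _ rpoly.mult[OF q(1) q'(1)]]) (simp add: q q' rpoly_real_valued[OF q(1)] rpoly_real_valued[OF q'(1)])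
qed

lemma regular_fun_real_polynomial_function:
  "real_polynomial_function p \<Longrightarrow> regular_fun I p"
  unfolding regular_fun_def using real_polynomial_function_imp_rpoly by blast

lemma real_polynomial_function_norm_power2:
  fixes P :: "'a::euclidean_space"
  shows "real_polynomial_function (\<lambda>x. norm (x - P) ^ 2)"
proof -
  have "norm (x - P) ^ 2 = (\<Sum>b\<in>Basis. (x \<bullet> b - P \<bullet> b) ^ 2)" for x
  proof -
    have "norm (x - P) ^ 2 = (x - P) \<bullet> (x - P)" by (rule power2_norm_eq_inner)
    also have "\<dots> = (\<Sum>b\<in>Basis. ((x - P) \<bullet> b) * ((x - P) \<bullet> b))" by (rule euclidean_inner)
    finally show ?thesis by (simp add: power2_eq_square inner_diff_left)
  qed
  moreover have "real_polynomial_function (\<lambda>x. (x \<bullet> b - P \<bullet> b) ^ 2)" for b :: 'a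
    using bounded_linear_inner_left[of b] by (intro real_polynomial_function_power real_polynomial_function_diff) auto
  ultimately show ?thesis
    using real_polynomial_function_sum[of Basis "\<lambda>x b. (x \<bullet> b - P \<bullet> b) ^ 2"] by simp
qed

section \<open>Orders of vanishing\<close>

definition vanishes_to_order :: "'a::real_normed_vector set \<Rightarrow> ('a \<Rightarrow> real) \<Rightarrow> 'a \<Rightarrow> nat \<Rightarrow> bool" where
  "vanishes_to_order X f P N \<longleftrightarrow>
     (\<exists>C r. r > 0 \<and> (\<forall>x\<in>X. norm (x - P) < r \<longrightarrow> \<bar>f x\<bar> \<le> C * norm (x - P) ^ N))"

definition dominates_power :: "'a::real_normed_vector set \<Rightarrow> ('a \<Rightarrow> real) \<Rightarrow> 'a \<Rightarrow> nat \<Rightarrow> bool" where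
  "dominates_power X f P N \<longleftrightarrow>
     (\<exists>c r. c > 0 \<and> r > 0 \<and> (\<forall>x\<in>X. norm (x - P) < r \<longrightarrow> c * norm (x - P) ^ N \<le> f x))"

lemma vanishes_to_order_add:
  assumes "vanishes_to_order X f P N" "vanishes_to_order X g P N"
  shows "vanishes_to_order X (\<lambda>x. f x + g x) P N"
proof -
  obtain C r C' r' where r: "r > 0" "\<forall>x\<in>X. norm (x - P) < r \<longrightarrow> \<bar>f x\<bar> \<le> C * norm (x - P) ^ N"
    and r': "r' > 0" "\<forall>x\<in>X. norm (x - P) < r' \<longrightarrow> \<bar>g x\<bar> \<le> C' * norm (x - P) ^ N"
    using assms unfolding vanishes_to_order_def by blast
  have "\<bar>f x + g x\<bar> \<le> (C + C') * norm (x - P) ^ N" if "x \<in> X" "norm (x - P) < min r r'" for x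
    using r(2) r'(2) that by (fastforce simp: distrib_right)
  then show ?thesis
    unfolding vanishes_to_order_def using r(1) r'(1) by (metis min_less_iff_conj)
qed

lemma vanishes_to_order_mult_continuous:
  assumes "vanishes_to_order X f P N" and "continuous (at P) c"
  shows "vanishes_to_order X (\<lambda>x. c x * f x) P N"
proof -
  obtain C r where r: "r > 0" "\<forall>x\<in>X. norm (x - P) < r \<longrightarrow> \<bar>f x\<bar> \<le> C * norm (x - P) ^ N"
    using assms(1) unfolding vanishes_to_order_def by blast
  obtain d where d: "d > 0" "\<forall>x. dist x P < d \<longrightarrow> dist (c x) (c P) < 1"
    using assms(2) unfolding continuous_at_eps_delta by (meson zero_less_one)
  have "\<bar>c x * f x\<bar> \<le> ((\<bar>c P\<bar> + 1) * max C 0) * norm (x - P) ^ N"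
    if "x \<in> X" "norm (x - P) < min r d" for x
  proof -
    have "\<bar>c x\<bar> \<le> \<bar>c P\<bar> + 1"
      using d(2) that by (auto simp: dist_norm dist_real_def)
    moreover have "\<bar>f x\<bar> \<le> max C 0 * norm (x - P) ^ N"
      using r(2) that by (fastforce intro: order_trans[OF _ mult_right_mono])
    ultimately show ?thesis
      unfolding abs_mult mult.assoc by (intro mult_mono) auto
  qed
  then show ?thesis
    unfolding vanishes_to_order_def using r(1) d(1) by (metis min_less_iff_conj)
qed

lemma vanishes_to_order_mono:
  assumes "vanishes_to_order X f P N" "M \<le> N"
  shows "vanishes_to_order X f P M"
proof -
  obtain C r where r: "r > 0" "\<forall>x\<in>X. norm (x - P) < r \<longrightarrow> \<bar>f x\<bar> \<le> C * norm (x - P) ^ N"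
    using assms(1) unfolding vanishes_to_order_def by blast
  have "\<bar>f x\<bar> \<le> max C 0 * norm (x - P) ^ M" if "x \<in> X" "norm (x - P) < min r 1" for x
  proof -
    have "\<bar>f x\<bar> \<le> max C 0 * norm (x - P) ^ N"
      using r(2) that by (fastforce intro: order_trans[OF _ mult_right_mono])
    also have "\<dots> \<le> max C 0 * norm (x - P) ^ M"
      using that assms(2) by (intro mult_left_mono power_decreasing) auto
    finally show ?thesis .
  qed
  then show ?thesis
    unfolding vanishes_to_order_def using r(1) by (metis min_less_iff_conj zero_less_one)
qed

lemma vanishes_to_order_power:
  assumes "vanishes_to_order X f P 1"
  shows "vanishes_to_order X (\<lambda>x. f x ^ m) P m"
proof -
  obtain C r where r: "r > 0" "\<forall>x\<in>X. norm (x - P) < r \<longrightarrow> \<bar>f x\<bar> \<le> C * norm (x - P)"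
    using assms unfolding vanishes_to_order_def by auto
  have "\<bar>f x ^ m\<bar> \<le> C ^ m * norm (x - P) ^ m" if "x \<in> X" "norm (x - P) < r" for x
    using r(2) that by (auto simp: power_abs power_mult_distrib[symmetric] intro: power_mono)
  then show ?thesis
    unfolding vanishes_to_order_def using r(1) by blast
qed

lemma vanishes_to_order_imp_eq_0:
  assumes "vanishes_to_order X f P (Suc N)" "P \<in> X"
  shows "f P = 0"
  using assms unfolding vanishes_to_order_def by auto

lemma vanishes_to_order_prod_norm_power:
  fixes P :: "'a::real_normed_vector"
  assumes "finite S" "P \<in> S"
  shows "vanishes_to_order X (\<lambda>x. \<Prod>Q\<in>S. norm (x - Q) ^ m) P m"
proof -
  have "vanishes_to_order X (\<lambda>x. norm (x - P) ^ m) P m"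
    unfolding vanishes_to_order_def by (intro exI[of _ 1] exI[of _ 1]) auto
  then have "vanishes_to_order X (\<lambda>x. (\<Prod>Q\<in>S - {P}. norm (x - Q) ^ m) * norm (x - P) ^ m) P m"
    by (rule vanishes_to_order_mult_continuous) (intro continuous_intros)
  then show ?thesis
    by (simp add: prod.remove[OF assms] mult.commute)
qed

lemma dominates_power_mono:
  assumes "dominates_power X f P k" "k \<le> m"
  shows "dominates_power X f P m"
proof -
  obtain c r where r: "c > 0" "r > 0" "\<forall>x\<in>X. norm (x - P) < r \<longrightarrow> c * norm (x - P) ^ k \<le> f x"
    using assms(1) unfolding dominates_power_def by blast
  have "c * norm (x - P) ^ m \<le> f x" if "x \<in> X" "norm (x - P) < min r 1" for x
    using r that assms(2) by (fastforce intro: order_trans[OF mult_left_mono[OF power_decreasing]])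
  then show ?thesis
    unfolding dominates_power_def using r(1,2) by (metis min_less_iff_conj zero_less_one)
qed

lemma dominates_power_0:
  assumes "continuous (at P within X) f" "f P > 0"
  shows "dominates_power X f P 0"
proof -
  obtain r where r: "r > 0" "\<forall>x\<in>X. dist x P < r \<longrightarrow> dist (f x) (f P) < f P / 2"
    using assms unfolding continuous_within_eps_delta by (meson half_gt_zero)
  have "f P / 2 * norm (x - P) ^ 0 \<le> f x" if "x \<in> X" "norm (x - P) < r" for x
  proof -
    have "dist (f x) (f P) < f P / 2" using r(2) that by (simp add: dist_norm)
    then show ?thesis unfolding dist_real_def abs_less_iff by simp
  qed
  then show ?thesis
    unfolding dominates_power_def using r(1) assms(2) by (metis half_gt_zero)
qed

lemma has_derivative_imp_local_lipschitz:
  assumes "(f has_derivative f') (at P)"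
  obtains C r where "r > 0" "\<And>x. norm (x - P) < r \<Longrightarrow> norm (f x - f P) \<le> C * norm (x - P)"
proof -
  have lin: "bounded_linear f'" and
    approx: "\<forall>e>0. \<exists>d>0. \<forall>y. norm (y - P) < d \<longrightarrow> norm (f y - f P - f' (y - P)) \<le> e * norm (y - P)"
    using assms by (auto simp: has_derivative_within_alt)
  obtain K where K: "\<And>v. norm (f' v) \<le> norm v * K"
    using bounded_linear.bounded[OF lin] by blast
  obtain r where r: "r > 0" "\<And>y. norm (y - P) < r \<Longrightarrow> norm (f y - f P - f' (y - P)) \<le> norm (y - P)"
    using approx[rule_format, of 1] by auto
  show ?thesis
  proof (rule that[OF r(1)])
    fix x assume x: "norm (x - P) < r"
    have "norm (f x - f P) \<le> norm (f x - f P - f' (x - P)) + norm (f' (x - P))"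
      using norm_triangle_ineq[of "f x - f P - f' (x - P)" "f' (x - P)"] by simp
    also have "\<dots> \<le> norm (x - P) + norm (x - P) * K"
      using r(2)[OF x] K[of "x - P"] by (rule add_mono)
    finally show "norm (f x - f P) \<le> (1 + K) * norm (x - P)"
      by (simp add: algebra_simps)
  qed
qed

lemma differentiable_imp_vanishes_to_order_1:
  assumes "f differentiable (at P)" "f P = 0"
  shows "vanishes_to_order X f P 1"
proof -
  obtain f' where f': "(f has_derivative f') (at P)"
    using assms(1) unfolding differentiable_def by blast
  obtain C r where "r > 0" "\<And>x. norm (x - P) < r \<Longrightarrow> norm (f x - f P) \<le> C * norm (x - P)"
    using has_derivative_imp_local_lipschitz[OF f'] by metis
  then show ?thesis
    unfolding vanishes_to_order_def using assms(2) by auto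
qed

lemma dominates_power_prod_norm_power:
  fixes P :: "'a::real_normed_vector"
  assumes "finite S" "P \<in> S"
  shows "dominates_power X (\<lambda>x. \<Prod>Q\<in>S. norm (x - Q) ^ m) P m"
proof -
  define R where "R x = (\<Prod>Q\<in>S - {P}. norm (x - Q) ^ m)" for x
  have "dominates_power X R P 0"
    unfolding R_def by (intro dominates_power_0 continuous_intros prod_pos) auto
  then obtain c r where r: "c > 0" "r > 0" "\<forall>x\<in>X. norm (x - P) < r \<longrightarrow> c \<le> R x"
    unfolding dominates_power_def by auto
  have "c * norm (x - P) ^ m \<le> (\<Prod>Q\<in>S. norm (x - Q) ^ m)" if "x \<in> X" "norm (x - P) < r" for x
  proof -
    have "c * norm (x - P) ^ m \<le> R x * norm (x - P) ^ m"
      using r(3) that by (intro mult_right_mono) auto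
    then show ?thesis by (simp add: prod.remove[OF assms] R_def mult.commute)
  qed
  then show ?thesis
    unfolding dominates_power_def using r(1,2) by blast
qed

lemma dominates_power_vanishes_to_order_bound:
  assumes "dominates_power X f P k" "vanishes_to_order X g P k"
  shows "\<exists>\<delta> r. \<delta> > 0 \<and> r > 0 \<and> (\<forall>x\<in>X. norm (x - P) < r \<longrightarrow> \<delta> * \<bar>g x\<bar> \<le> f x)"
proof -
  obtain c r where r: "c > 0" "r > 0" "\<forall>x\<in>X. norm (x - P) < r \<longrightarrow> c * norm (x - P) ^ k \<le> f x"
    using assms(1) unfolding dominates_power_def by blast
  obtain C r' where r': "r' > 0" "\<forall>x\<in>X. norm (x - P) < r' \<longrightarrow> \<bar>g x\<bar> \<le> C * norm (x - P) ^ k"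
    using assms(2) unfolding vanishes_to_order_def by blast
  have "c / (\<bar>C\<bar> + 1) * \<bar>g x\<bar> \<le> f x" if "x \<in> X" "norm (x - P) < min r r'" for x
  proof -
    have "\<bar>g x\<bar> \<le> (\<bar>C\<bar> + 1) * norm (x - P) ^ k"
      using r'(2) that by (fastforce intro: order_trans[OF _ mult_right_mono])
    then have "c / (\<bar>C\<bar> + 1) * \<bar>g x\<bar> \<le> c / (\<bar>C\<bar> + 1) * ((\<bar>C\<bar> + 1) * norm (x - P) ^ k)"
      using r(1) by (intro mult_left_mono) auto
    moreover have "\<bar>C\<bar> + 1 \<noteq> 0" using abs_ge_zero[of C] by linarith
    ultimately have "c / (\<bar>C\<bar> + 1) * \<bar>g x\<bar> \<le> c * norm (x - P) ^ k"
      by simp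
    also have "\<dots> \<le> f x"
      using r(3) that by simp
    finally show ?thesis .
  qed
  then show ?thesis
    using r(1,2) r'(1) by (intro exI[of _ "c / (\<bar>C\<bar> + 1)"] exI[of _ "min r r'"]) simp
qed

section \<open>Gluing local polynomial approximations\<close>

lemma polynomial_bump:
  fixes P :: "'a::euclidean_space"
  assumes "finite S" "P \<notin> S"
  obtains e where "real_polynomial_function e" "vanishes_to_order X (\<lambda>x. 1 - e x) P N"
    "\<And>Q. Q \<in> S \<Longrightarrow> vanishes_to_order X e Q N"
proof -
  define W where "W x = (\<Prod>Q\<in>S. norm (x - Q) ^ (2 * N))" for x
  define u where "u x = 1 - W x / W P" for x
  define e where "e x = 1 - u x ^ N" for x
  \<comment> \<open>\<open>1 - e = u\<^sup>N\<close> with \<open>u P = 0\<close>, while \<open>e = W / W P * (\<Sum>k<N. u\<^sup>k)\<close> is divisible by \<open>W\<close>\<close>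
  have WP: "W P > 0"
    unfolding W_def using assms(2) by (intro prod_pos zero_less_power) auto
  have W_poly: "real_polynomial_function W"
    unfolding W_def power_mult
    by (intro real_polynomial_function_prod assms(1) real_polynomial_function_power[OF real_polynomial_function_norm_power2])
  have u_poly: "real_polynomial_function u"
    unfolding u_def using W_poly by (intro real_polynomial_function_diff real_polynomial_function_divide) auto
  have "real_polynomial_function e"
    unfolding e_def using u_poly by (intro real_polynomial_function_diff real_polynomial_function_power) auto
  moreover have "vanishes_to_order X (\<lambda>x. 1 - e x) P N"
  proof -
    have "vanishes_to_order X u P 1"
      using differentiable_at_real_polynomial_function[OF u_poly] WP
      by (intro differentiable_imp_vanishes_to_order_1) (auto simp: u_def)
    then show ?thesis
      unfolding e_def by (simp add: vanishes_to_order_power)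
  qed
  moreover have "vanishes_to_order X e Q N" if "Q \<in> S" for Q
  proof -
    have "vanishes_to_order X W Q N"
      unfolding W_def
      by (rule vanishes_to_order_mono[OF vanishes_to_order_prod_norm_power[OF assms(1) that]]) simp
    then have "vanishes_to_order X (\<lambda>x. (\<Sum>k<N. u x ^ k) / W P * W x) Q N"
      using continuous_real_polymonial_function[OF u_poly] WP
      by (intro vanishes_to_order_mult_continuous) (auto intro!: continuous_intros)
    moreover have "e = (\<lambda>x. (\<Sum>k<N. u x ^ k) / W P * W x)"
      unfolding e_def one_diff_power_eq using WP by (simp add: u_def fun_eq_iff)
    ultimately show ?thesis by simp
  qed
  ultimately show ?thesis using that by blast
qed

lemma glue_local_polynomial_approximations:
  fixes f :: "'a::euclidean_space \<Rightarrow> real"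
  assumes "finite Z"
    and "\<forall>P\<in>Z. \<exists>h. real_polynomial_function h \<and> vanishes_to_order X (\<lambda>x. f x - h x) P N"
  shows "\<exists>h. real_polynomial_function h \<and> (\<forall>P\<in>Z. vanishes_to_order X (\<lambda>x. f x - h x) P N)"
  using assms
proof (induction Z rule: finite_induct)
  case empty
  show ?case by auto
next
  case (insert P S)
  then obtain h where h: "real_polynomial_function h" "\<forall>Q\<in>S. vanishes_to_order X (\<lambda>x. f x - h x) Q N"
    by blast
  obtain hP where hP: "real_polynomial_function hP" "vanishes_to_order X (\<lambda>x. f x - hP x) P N"
    using insert.prems by blast
  obtain e where e: "real_polynomial_function e" "vanishes_to_order X (\<lambda>x. 1 - e x) P N"
    "\<And>Q. Q \<in> S \<Longrightarrow> vanishes_to_order X e Q N"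
    using polynomial_bump[OF insert.hyps] by blast
  define h' where "h' x = h x + e x * (hP x - h x)" for x
  have "real_polynomial_function h'"
    unfolding h'_def
    by (intro real_polynomial_function.intros(3)[OF h(1)] real_polynomial_function.intros(4)[OF e(1)] real_polynomial_function_diff hP(1) h(1))
  moreover have "vanishes_to_order X (\<lambda>x. f x - h' x) P N"
  proof -
    have "vanishes_to_order X (\<lambda>x. (f x - hP x) + (hP x - h x) * (1 - e x)) P N"
      using continuous_real_polymonial_function[OF real_polynomial_function_diff[OF hP(1) h(1)]]
      by (intro vanishes_to_order_add hP(2) vanishes_to_order_mult_continuous e(2))
    then show ?thesis by (simp add: h'_def algebra_simps)
  qed
  moreover have "vanishes_to_order X (\<lambda>x. f x - h' x) Q N" if "Q \<in> S" for Q
  proof -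
    have "vanishes_to_order X (\<lambda>x. (f x - h x) + (h x - hP x) * e x) Q N"
      using continuous_real_polymonial_function[OF real_polynomial_function_diff[OF h(1) hP(1)]]
      by (intro vanishes_to_order_add h(2)[rule_format, OF that] vanishes_to_order_mult_continuous e(3)[OF that])
    then show ?thesis by (simp add: h'_def algebra_simps)
  qed
  ultimately show ?case by blast
qed

section \<open>A polynomial between two functions\<close>

lemma compact_positive_lower_bound:
  fixes f :: "'a::topological_space \<Rightarrow> real"
  assumes "compact Y" "continuous_on Y f" "\<And>x. x \<in> Y \<Longrightarrow> f x > 0"
  shows "\<exists>m>0. \<forall>x\<in>Y. m \<le> f x"
proof (cases "Y = {}")
  case False
  then obtain y where "y \<in> Y" "\<And>x. x \<in> Y \<Longrightarrow> f y \<le> f x"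
    using continuous_attains_inf[OF assms(1) _ assms(2)] by blast
  then show ?thesis using assms(3) by blast
qed (auto intro: exI[of _ 1])

lemma dominates_on_compact:
  fixes X Z :: "'a::real_normed_vector set"
  assumes "compact X" "finite Z" "continuous_on X f" "continuous_on X g"
    and "\<And>x. x \<in> X - Z \<Longrightarrow> f x > 0"
    and "\<And>P. P \<in> Z \<Longrightarrow> \<exists>k. dominates_power X f P k \<and> vanishes_to_order X g P k"
  shows "\<exists>\<delta>>0. \<forall>x\<in>X. \<delta> * \<bar>g x\<bar> \<le> f x"
proof -
  have "\<forall>P\<in>Z. \<exists>\<delta> r. \<delta> > 0 \<and> r > 0 \<and> (\<forall>x\<in>X. norm (x - P) < r \<longrightarrow> \<delta> * \<bar>g x\<bar> \<le> f x)"
    using dominates_power_vanishes_to_order_bound assms(6) by blast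
  then obtain \<delta>P r where \<delta>P: "\<And>P. P \<in> Z \<Longrightarrow> \<delta>P P > 0 \<and> r P > 0 \<and>
      (\<forall>x\<in>X. norm (x - P) < r P \<longrightarrow> \<delta>P P * \<bar>g x\<bar> \<le> f x)"
    by metis
  define Y where "Y = X - (\<Union>P\<in>Z. ball P (r P))"
  have Y: "compact Y"
    unfolding Y_def using assms(1) by (intro compact_diff) auto
  have f_Y: "continuous_on Y f"
    using assms(3) by (rule continuous_on_subset) (auto simp: Y_def)
  have "f x > 0" if "x \<in> Y" for x
    using that assms(5) \<delta>P by (force simp: Y_def)
  from compact_positive_lower_bound[OF Y f_Y this]
  obtain m where m: "m > 0" "\<And>x. x \<in> Y \<Longrightarrow> m \<le> f x"
    by blast
  obtain G where G: "G > 0" "\<forall>y\<in>g ` X. norm y \<le> G"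
    using compact_imp_bounded[OF compact_continuous_image[OF assms(4,1)]] unfolding bounded_pos by blast
  define \<delta> where "\<delta> = Min (insert (m / G) (\<delta>P ` Z))"
  have "\<delta> > 0"
    unfolding \<delta>_def using assms(2) m(1) G(1) \<delta>P by (subst Min_gr_iff) auto
  moreover have "\<delta> * \<bar>g x\<bar> \<le> f x" if x: "x \<in> X" for x
  proof (cases "x \<in> Y")
    case True
    have "\<delta> * \<bar>g x\<bar> \<le> m / G * G"
      using G x m(1) \<open>\<delta> > 0\<close> unfolding \<delta>_def by (intro mult_mono) (auto simp: assms(2))
    then show ?thesis using m(2)[OF True] G(1) by simp
  next
    case False
    then obtain P where P: "P \<in> Z" "norm (x - P) < r P"
      using x by (auto simp: Y_def dist_norm norm_minus_commute)
    have "\<delta> * \<bar>g x\<bar> \<le> \<delta>P P * \<bar>g x\<bar>"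
      unfolding \<delta>_def using assms(2) P(1) by (intro mult_right_mono) auto
    also have "\<dots> \<le> f x" using \<delta>P P x by blast
    finally show ?thesis .
  qed
  ultimately show ?thesis by blast
qed

lemma continuous_at_within_linear_bound:
  assumes "r > 0" "L x0 = 0" "\<And>x. x \<in> X \<Longrightarrow> norm (x - x0) < r \<Longrightarrow> \<bar>L x\<bar> \<le> B * norm (x - x0)"
  shows "continuous (at x0 within X) L"
proof -
  have "(L \<longlongrightarrow> 0) (at x0 within X)"
  proof (rule Lim_null_comparison)
    show "\<forall>\<^sub>F x in at x0 within X. norm (L x) \<le> B * norm (x - x0)"
      unfolding eventually_at using assms(1,3) by (auto simp: dist_norm)
    have "((\<lambda>x. B * norm (x - x0)) \<longlongrightarrow> B * norm (x0 - x0)) (at x0 within X)"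
      by (intro tendsto_intros)
    then show "((\<lambda>x. B * norm (x - x0)) \<longlongrightarrow> 0) (at x0 within X)" by simp
  qed
  then show ?thesis
    unfolding continuous_within using assms(2) by simp
qed

lemma continuous_on_quotient_vanishing:
  fixes X Z :: "'a::real_normed_vector set"
  assumes "finite Z" "continuous_on X a" "continuous_on X g" "\<And>x. x \<in> X - Z \<Longrightarrow> g x > 0"
    and "\<And>P. P \<in> Z \<Longrightarrow> vanishes_to_order X a P (Suc k) \<and> dominates_power X g P k"
  shows "continuous_on X (\<lambda>x. if x \<in> Z then 0 else a x / g x)" (is "continuous_on X ?L")
  unfolding continuous_on_eq_continuous_within
proof
  fix x0 assume x0: "x0 \<in> X"
  show "continuous (at x0 within X) ?L"
  proof (cases "x0 \<in> Z")
    case True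
    obtain C r c r' where r: "r > 0" "\<forall>x\<in>X. norm (x - x0) < r \<longrightarrow> \<bar>a x\<bar> \<le> C * norm (x - x0) ^ Suc k"
      and r': "c > 0" "r' > 0" "\<forall>x\<in>X. norm (x - x0) < r' \<longrightarrow> c * norm (x - x0) ^ k \<le> g x"
      using assms(5)[OF True] unfolding vanishes_to_order_def dominates_power_def by blast
    have "\<bar>?L x\<bar> \<le> max C 0 / c * norm (x - x0)" if "x \<in> X" "norm (x - x0) < min r r'" for x
    proof (cases "x \<in> Z")
      case False
      then have "x \<noteq> x0" and gx: "g x > 0" using True assms(4) that(1) by auto
      have "\<bar>a x\<bar> \<le> max C 0 * norm (x - x0) ^ Suc k"
        using r(2) that by (fastforce intro: order_trans[OF _ mult_right_mono])
      then have "\<bar>a x\<bar> / g x \<le> max C 0 * norm (x - x0) ^ Suc k / (c * norm (x - x0) ^ k)"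
        using r'(1,3) that \<open>x \<noteq> x0\<close> by (intro frac_le) auto
      also have "\<dots> = max C 0 / c * norm (x - x0)"
        using \<open>x \<noteq> x0\<close> r'(1) by (simp add: field_simps)
      finally show ?thesis using False gx by (simp add: abs_divide)
    qed (use r'(1) in auto)
    from continuous_at_within_linear_bound[where r = "min r r'" and X = X, OF _ _ this] show ?thesis
      using r(1) r'(2) True by simp
  next
    case False
    obtain d where d: "d > 0" "\<forall>x\<in>Z. x \<noteq> x0 \<longrightarrow> d \<le> dist x0 x"
      using finite_set_avoid[OF assms(1)] by blast
    have "continuous (at x0 within X) (\<lambda>x. a x / g x)"
      using assms(2,3) x0 False assms(4)[of x0] unfolding continuous_on_eq_continuous_within continuous_within
      by (auto intro!: tendsto_divide)
    then show ?thesis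
      by (rule continuous_transform_within[OF _ d(1) x0]) (use d(2) False in \<open>force simp: dist_commute\<close>)
  qed
qed

lemma weighted_correction_between:
  fixes a b h g q L \<delta> :: real
  assumes "g > 0" "g * L = a - h" "\<bar>L + \<delta> / 2 - q\<bar> < \<delta> / 2" "\<delta> * g \<le> b - a"
  shows "a \<le> h + g * q \<and> h + g * q \<le> b"
proof -
  have "0 \<le> q - L" "q - L \<le> \<delta>"
    using assms(3) unfolding abs_less_iff by linarith+
  then have "0 \<le> g * (q - L)" "g * (q - L) \<le> \<delta> * g"
    using assms(1) by (simp_all add: mult.commute mult_left_mono)
  then show ?thesis
    using assms(2,4) by (simp add: algebra_simps)
qed

lemma polynomial_between_weighted:
  fixes \<phi> \<psi> h g :: "'a::euclidean_space \<Rightarrow> real"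
  assumes X: "compact X" and Z: "finite Z" and cont: "continuous_on X \<phi>"
    and le: "\<And>x. x \<in> X \<Longrightarrow> \<phi> x \<le> \<psi> x"
    and h: "real_polynomial_function h" and g: "real_polynomial_function g"
    and g_Z: "\<And>x. x \<in> Z \<Longrightarrow> g x = 0" and g_pos: "\<And>x. x \<notin> Z \<Longrightarrow> g x > 0"
    and order: "\<And>P. P \<in> Z \<Longrightarrow> vanishes_to_order X (\<lambda>x. \<phi> x - h x) P (Suc m) \<and> dominates_power X g P m"
    and \<delta>: "\<delta> > 0" "\<And>x. x \<in> X \<Longrightarrow> \<delta> * g x \<le> \<psi> x - \<phi> x"
  shows "\<exists>p. real_polynomial_function p \<and> (\<forall>x\<in>X. \<phi> x \<le> p x \<and> p x \<le> \<psi> x)"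
proof -
  have poly_cont: "continuous_on X f" if "real_polynomial_function f" for f :: "'a \<Rightarrow> real"
    using continuous_on_polymonial_function[of f] that by (simp add: real_polynomial_function_eq)
  define L where "L x = (if x \<in> Z then 0 else (\<phi> x - h x) / g x)" for x
  have "continuous_on X L"
    unfolding L_def
    using continuous_on_quotient_vanishing[OF Z continuous_on_diff[OF cont poly_cont[OF h]] poly_cont[OF g]]
      g_pos order by blast
  then have "continuous_on X (\<lambda>x. L x + \<delta> / 2)"
    by (intro continuous_intros)
  then obtain q where q: "real_polynomial_function q" "\<And>x. x \<in> X \<Longrightarrow> \<bar>(L x + \<delta> / 2) - q x\<bar> < \<delta> / 2"
    using Stone_Weierstrass_real_polynomial_function[OF X] \<delta>(1) by (metis half_gt_zero)
  define p where "p x = h x + g x * q x" for x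
  have "real_polynomial_function p"
    unfolding p_def by (intro real_polynomial_function.intros(3,4) h g q(1))
  moreover have "\<phi> x \<le> p x \<and> p x \<le> \<psi> x" if x: "x \<in> X" for x
  proof (cases "x \<in> Z")
    case True
    have "\<phi> x - h x = 0"
      using vanishes_to_order_imp_eq_0[OF conjunct1[OF order[OF True]] x] .
    then show ?thesis
      using le[OF x] by (simp add: p_def g_Z[OF True])
  next
    case False
    have "g x * L x = \<phi> x - h x"
      using g_pos[OF False] False by (simp add: L_def)
    then show ?thesis
      unfolding p_def using weighted_correction_between g_pos[OF False] q(2)[OF x] \<delta>(2)[OF x] by blast
  qed
  ultimately show ?thesis by blast
qed

lemma polynomial_between:
  fixes \<phi> \<psi> :: "'a::euclidean_space \<Rightarrow> real"
  assumes X: "compact X" and Z: "finite Z"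
    and cont: "continuous_on X \<phi>" "continuous_on X \<psi>"
    and le: "\<And>x. x \<in> X \<Longrightarrow> \<phi> x \<le> \<psi> x" and zeros: "\<And>x. x \<in> X \<Longrightarrow> \<psi> x = \<phi> x \<Longrightarrow> x \<in> Z"
    and dom: "\<And>P. P \<in> Z \<Longrightarrow> \<exists>k. dominates_power X (\<lambda>x. \<psi> x - \<phi> x) P k"
    and approx: "\<And>P N. P \<in> Z \<Longrightarrow> \<exists>h. real_polynomial_function h \<and> vanishes_to_order X (\<lambda>x. \<phi> x - h x) P N"
  shows "\<exists>p. real_polynomial_function p \<and> (\<forall>x\<in>X. \<phi> x \<le> p x \<and> p x \<le> \<psi> x)"
proof -
  obtain k where k: "\<And>P. P \<in> Z \<Longrightarrow> dominates_power X (\<lambda>x. \<psi> x - \<phi> x) P (k P)"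
    using dom by metis
  define m where "m = 2 * ((\<Sum>P\<in>Z. k P) + 1)"
  \<comment> \<open>even, so that the weight \<open>g\<close> below is a polynomial, and larger than every order \<open>k P\<close>\<close>
  have dom_m: "dominates_power X (\<lambda>x. \<psi> x - \<phi> x) P m" if "P \<in> Z" for P
    using k[OF that] by (rule dominates_power_mono) (use member_le_sum[OF that, of k] Z in \<open>simp add: m_def\<close>)
  have "\<forall>P\<in>Z. \<exists>h. real_polynomial_function h \<and> vanishes_to_order X (\<lambda>x. \<phi> x - h x) P (Suc m)"
    using approx by blast
  from glue_local_polynomial_approximations[OF Z this]
  obtain h where h: "real_polynomial_function h" "\<forall>P\<in>Z. vanishes_to_order X (\<lambda>x. \<phi> x - h x) P (Suc m)"
    by blast
  define g where "g x = (\<Prod>Q\<in>Z. norm (x - Q) ^ m)" for x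
  have g_poly: "real_polynomial_function g"
    unfolding g_def m_def power_mult
    by (intro real_polynomial_function_prod Z real_polynomial_function_power real_polynomial_function_norm_power2)
  have g_Z: "g x = 0" if "x \<in> Z" for x
    unfolding g_def using that Z by (auto simp: m_def)
  have g_pos: "g x > 0" if "x \<notin> Z" for x
    unfolding g_def using that by (intro prod_pos zero_less_power) auto
  have "\<psi> x - \<phi> x > 0" if "x \<in> X - Z" for x
    using le zeros that by force
  moreover have "\<exists>k. dominates_power X (\<lambda>x. \<psi> x - \<phi> x) P k \<and> vanishes_to_order X g P k" if "P \<in> Z" for P
    using dom_m[OF that] vanishes_to_order_prod_norm_power[OF Z that] unfolding g_def by blast
  moreover have "continuous_on X g"
    unfolding g_def by (intro continuous_intros)
  ultimately obtain \<delta> where \<delta>: "\<delta> > 0" "\<And>x. x \<in> X \<Longrightarrow> \<delta> * \<bar>g x\<bar> \<le> \<psi> x - \<phi> x"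
    using dominates_on_compact[OF X Z continuous_on_diff[OF cont(2,1)]] by blast
  have "\<delta> * g x \<le> \<psi> x - \<phi> x" if "x \<in> X" for x
    using \<delta>(2)[OF that] g_Z[of x] g_pos[of x] by (cases "x \<in> Z") auto
  then show ?thesis
    using polynomial_between_weighted[OF X Z cont(1) le h(1) g_poly g_Z g_pos _ \<delta>(1)]
      h(2) dominates_power_prod_norm_power[OF Z] unfolding g_def by blast
qed

section \<open>Analytic parametrizations and holomorphic coordinates\<close>

lemma real_analytic_on_holomorphic_extension:
  assumes "real_analytic_on g S" "0 \<in> S"
  obtains d G where "d > 0" "G holomorphic_on ball 0 d"
    "\<And>t. \<bar>t\<bar> < d \<Longrightarrow> G (complex_of_real t) = complex_of_real (g t)"
proof -
  obtain d a where d: "d > 0" "\<And>s. \<bar>s\<bar> < d \<Longrightarrow> (\<lambda>k. a k * s ^ k) sums g s"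
    using assms unfolding real_analytic_on_def by force
  define G where "G w = (\<Sum>k. complex_of_real (a k) * w ^ k)" for w
  have real_sums: "(\<lambda>k. complex_of_real (a k) * complex_of_real s ^ k) sums complex_of_real (g s)"
    if "\<bar>s\<bar> < d" for s
    using d(2)[OF that] sums_of_real[of "\<lambda>k. a k * s ^ k"] by simp
  have sums: "(\<lambda>k. complex_of_real (a k) * w ^ k) sums G w" if "w \<in> ball 0 d" for w
  proof -
    define s where "s = (norm w + d) / 2"
    have ws: "norm w < s" and sd: "s < d"
      using that by (auto simp: s_def)
    then have "s > 0"
      using norm_ge_zero[of w] by linarith
    then have "\<bar>s\<bar> < d" "norm w < norm (complex_of_real s)"
      using ws sd by simp_all
    then have "summable (\<lambda>k. complex_of_real (a k) * w ^ k)"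
      using powser_inside[OF sums_summable[OF real_sums]] by blast
    then show ?thesis unfolding G_def by (rule summable_sums)
  qed
  have "G holomorphic_on ball 0 d"
    using sums by (intro power_series_holomorphic) auto
  moreover have "G (complex_of_real t) = complex_of_real (g t)" if "\<bar>t\<bar> < d" for t
    using sums[of "complex_of_real t"] real_sums[OF that] that by (simp add: sums_unique2)
  ultimately show ?thesis using that d(1) by blast
qed

lemma deriv_holomorphic_extension:
  assumes "G holomorphic_on ball 0 d" "d > 0"
    and "\<And>t. \<bar>t\<bar> < d \<Longrightarrow> G (complex_of_real t) = complex_of_real (g t)"
    and "(g has_real_derivative c) (at 0)"
  shows "deriv G 0 = complex_of_real c"
proof -
  have "(G has_field_derivative deriv G 0) (at (complex_of_real 0))"
    using holomorphic_derivI[OF assms(1) open_ball, of 0] assms(2) by simp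
  then have "((\<lambda>t. G (complex_of_real t)) has_vector_derivative deriv G 0) (at 0)"
    by (rule has_vector_derivative_real_field)
  moreover have "((\<lambda>t. complex_of_real (g t)) has_vector_derivative complex_of_real c) (at 0)"
    using assms(4) by (rule has_vector_derivative_of_real)
  then have "((\<lambda>t. G (complex_of_real t)) has_vector_derivative complex_of_real c) (at 0)"
    by (rule has_vector_derivative_transform_within_open[of _ _ _ "ball 0 d"]) (use assms(2,3) in auto)
  ultimately show ?thesis by (rule vector_derivative_unique_at)
qed

lemma analytic_param_islimpt:
  assumes "analytic_param X P \<gamma> e"
  shows "P islimpt X"
  unfolding islimpt_approachable
proof (intro allI impI)
  fix \<epsilon> :: real assume "\<epsilon> > 0"
  from assms have e: "e > 0" and "\<gamma> 0 = P" and sub: "\<gamma> ` {-e<..<e} \<subseteq> X"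
    and hom: "\<exists>g. homeomorphism {-e<..<e} (\<gamma> ` {-e<..<e}) \<gamma> g"
    unfolding analytic_param_def by auto
  then have inj: "inj_on \<gamma> {-e<..<e}" and cont: "continuous_on {-e<..<e} \<gamma>"
    by (auto simp: homeomorphism_def intro: inj_on_inverseI)
  obtain d where d: "d > 0" "\<forall>t\<in>{-e<..<e}. dist t 0 < d \<longrightarrow> dist (\<gamma> t) P < \<epsilon>"
    using cont e \<open>\<epsilon> > 0\<close> \<open>\<gamma> 0 = P\<close>
    unfolding continuous_on_eq_continuous_within continuous_within_eps_delta by fastforce
  define t where "t = min d e / 2"
  have t: "t \<in> {-e<..<e}" "t \<noteq> 0" "dist t 0 < d"
    using d(1) e by (auto simp: t_def dist_real_def)
  have "\<gamma> t \<noteq> P"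
    using inj_onD[OF inj, of t 0] t e \<open>\<gamma> 0 = P\<close> by auto
  then show "\<exists>x\<in>X. x \<noteq> P \<and> dist x P < \<epsilon>"
    using sub t d(2) by blast
qed

lemma analytic_param_near_point:
  assumes "analytic_param X P \<gamma> e" "s > 0"
  shows "\<exists>\<rho>>0. \<forall>x\<in>X. norm (x - P) < \<rho> \<longrightarrow> (\<exists>t. \<bar>t\<bar> < min e s \<and> \<gamma> t = x)"
proof -
  from assms(1) have e: "e > 0" and "\<gamma> 0 = P"
    and op: "openin (top_of_set X) (\<gamma> ` {-e<..<e})"
    and hom: "\<exists>g. homeomorphism {-e<..<e} (\<gamma> ` {-e<..<e}) \<gamma> g"
    unfolding analytic_param_def by auto
  obtain g where g: "\<forall>t\<in>{-e<..<e}. g (\<gamma> t) = t" "\<forall>y\<in>\<gamma> ` {-e<..<e}. \<gamma> (g y) = y"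
    "g ` \<gamma> ` {-e<..<e} = {-e<..<e}" "continuous_on (\<gamma> ` {-e<..<e}) g"
    using hom by (auto simp: homeomorphism_def)
  have P: "P \<in> \<gamma> ` {-e<..<e}" "g P = 0"
    using \<open>\<gamma> 0 = P\<close> e g(1) by force+
  obtain \<epsilon>1 where \<epsilon>1: "\<epsilon>1 > 0" "ball P \<epsilon>1 \<inter> X \<subseteq> \<gamma> ` {-e<..<e}"
    using op P(1) unfolding openin_contains_ball by blast
  obtain \<epsilon>2 where \<epsilon>2: "\<epsilon>2 > 0" "\<forall>y\<in>\<gamma> ` {-e<..<e}. dist y P < \<epsilon>2 \<longrightarrow> dist (g y) 0 < s"
    using g(4) P assms(2) unfolding continuous_on_eq_continuous_within continuous_within_eps_delta by metis
  have "\<exists>t. \<bar>t\<bar> < min e s \<and> \<gamma> t = x" if "x \<in> X" "norm (x - P) < min \<epsilon>1 \<epsilon>2" for x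
  proof -
    have x: "x \<in> \<gamma> ` {-e<..<e}"
      using \<epsilon>1(2) that by (auto simp: dist_norm norm_minus_commute)
    then have "g x \<in> {-e<..<e}" "\<bar>g x\<bar> < s"
      using g(3) \<epsilon>2(2) that(2) by (auto simp: dist_norm)
    then show ?thesis
      using g(2) x by (intro exI[of _ "g x"]) auto
  qed
  then show ?thesis
    using \<epsilon>1(1) \<epsilon>2(1) by (metis min_less_iff_conj)
qed

lemma holomorphic_local_left_inverse:
  assumes "S holomorphic_on A" "open A" "0 \<in> A" "S 0 = 0" "deriv S 0 \<noteq> 0"
  shows "\<exists>r T. r > 0 \<and> ball 0 r \<subseteq> A \<and> T holomorphic_on ball 0 r \<and> (\<forall>z\<in>ball 0 r. T (S z) = z)"
proof -
  obtain r1 where r1: "r1 > 0" "ball 0 r1 \<subseteq> A" "open (S ` ball 0 r1)" "inj_on S (ball 0 r1)"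
    using has_complex_derivative_locally_invertible[OF assms(1,3,2,5)] by blast
  obtain T where T: "T holomorphic_on S ` ball 0 r1" "\<And>z. z \<in> ball 0 r1 \<Longrightarrow> T (S z) = z"
    using holomorphic_has_inverse[OF holomorphic_on_subset[OF assms(1) r1(2)] open_ball r1(4)] by metis
  have "0 \<in> S ` ball 0 r1"
    using assms(4) r1(1) by (metis centre_in_ball image_eqI)
  then obtain r where "r > 0" "ball 0 r \<subseteq> S ` ball 0 r1"
    using r1(3) openE by blast
  then show ?thesis
    using r1(1,2) T holomorphic_on_subset
    by (intro exI[of _ "min r r1"] exI[of _ T]) (auto simp: subset_iff)
qed

lemma norm_coordinate_le: "norm (complex_of_real (x $ i - P $ i)) \<le> norm (x - P)"
  unfolding norm_of_real using component_le_norm_cart[of "x - P" i] by simp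

definition holomorphic_in_coordinate :: "(real^'n) set \<Rightarrow> (real^'n \<Rightarrow> real) \<Rightarrow> real^'n \<Rightarrow> 'n \<Rightarrow> bool" where
  "holomorphic_in_coordinate X f P i \<longleftrightarrow>
     (\<exists>r K. r > 0 \<and> K holomorphic_on ball 0 r \<and>
        (\<forall>x\<in>X. norm (x - P) < r \<longrightarrow> complex_of_real (f x) = K (complex_of_real (x $ i - P $ i))))"

lemma analytic_param_local_coordinate:
  fixes \<gamma> :: "real \<Rightarrow> real^'n"
  assumes "analytic_param X P \<gamma> e"
  shows "\<exists>i d S. d > 0 \<and> S holomorphic_on ball 0 d \<and> S 0 = 0 \<and> deriv S 0 \<noteq> 0 \<and>
    (\<forall>t. \<bar>t\<bar> < d \<longrightarrow> S (complex_of_real t) = complex_of_real (\<gamma> t $ i - P $ i))"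
proof -
  from assms have e: "e > 0" and "\<gamma> 0 = P"
    and an: "\<And>k. real_analytic_on (\<lambda>t. \<gamma> t $ k) {-e<..<e}"
    and "\<exists>v. v \<noteq> 0 \<and> (\<gamma> has_vector_derivative v) (at 0)"
    unfolding analytic_param_def by auto
  then obtain v :: "real^'n" and i where v: "(\<gamma> has_vector_derivative v) (at 0)" "v $ i \<noteq> 0"
    by (metis vec_eq_iff zero_index)
  obtain d G where G: "d > 0" "G holomorphic_on ball 0 d"
    "\<And>t. \<bar>t\<bar> < d \<Longrightarrow> G (complex_of_real t) = complex_of_real (\<gamma> t $ i)"
    using real_analytic_on_holomorphic_extension[OF an[of i]] e by auto
  have "((\<lambda>t. \<gamma> t $ i) has_real_derivative v $ i) (at 0)"
    using bounded_linear.has_vector_derivative[OF bounded_linear_vec_nth v(1)]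
    by (simp add: has_real_derivative_iff_has_vector_derivative)
  then have dG: "deriv G 0 = complex_of_real (v $ i)"
    using deriv_holomorphic_extension[OF G(2,1), where g = "\<lambda>t. \<gamma> t $ i"] G(3) by blast
  define S where "S z = G z - complex_of_real (P $ i)" for z
  have "S holomorphic_on ball 0 d"
    unfolding S_def using G(2) by (intro holomorphic_intros)
  moreover have "S 0 = 0"
    using G(3)[of 0] G(1) \<open>\<gamma> 0 = P\<close> by (simp add: S_def)
  moreover have "(G has_field_derivative deriv G 0) (at 0)"
    using holomorphic_derivI[OF G(2) open_ball, of 0] G(1) by simp
  then have "(S has_field_derivative deriv G 0) (at 0)"
    unfolding S_def by (auto intro!: derivative_eq_intros)
  then have "deriv S 0 \<noteq> 0"
    using dG v(2) by (simp add: DERIV_imp_deriv)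
  moreover have "S (complex_of_real t) = complex_of_real (\<gamma> t $ i - P $ i)" if "\<bar>t\<bar> < d" for t
    using G(3)[OF that] by (simp add: S_def)
  ultimately show ?thesis
    using G(1) by blast
qed

lemma analytic_param_coordinate_inverse:
  fixes \<gamma> :: "real \<Rightarrow> real^'n"
  assumes par: "analytic_param X P \<gamma> e"
  shows "\<exists>i r T. r > 0 \<and> T holomorphic_on ball 0 r \<and> T 0 = 0 \<and>
    (\<forall>x\<in>X. norm (x - P) < r \<longrightarrow>
       (\<exists>t. \<bar>t\<bar> < e \<and> \<gamma> t = x \<and> T (complex_of_real (x $ i - P $ i)) = complex_of_real t))"
proof -
  obtain i d S where S: "d > 0" "S holomorphic_on ball 0 d" "S 0 = 0" "deriv S 0 \<noteq> 0"
    "\<forall>t. \<bar>t\<bar> < d \<longrightarrow> S (complex_of_real t) = complex_of_real (\<gamma> t $ i - P $ i)"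
    using analytic_param_local_coordinate[OF par] by blast
  have "0 \<in> ball (0::complex) d"
    using S(1) by simp
  from holomorphic_local_left_inverse[OF S(2) open_ball this S(3,4)]
  obtain r1 T where T: "r1 > 0" "ball (0::complex) r1 \<subseteq> ball 0 d" "T holomorphic_on ball 0 r1"
    "\<forall>z\<in>ball 0 r1. T (S z) = z"
    by blast
  obtain \<rho> where \<rho>: "\<rho> > 0" "\<forall>x\<in>X. norm (x - P) < \<rho> \<longrightarrow> (\<exists>t. \<bar>t\<bar> < min e r1 \<and> \<gamma> t = x)"
    using analytic_param_near_point[OF par T(1)] by blast
  have "\<exists>t. \<bar>t\<bar> < e \<and> \<gamma> t = x \<and> T (complex_of_real (x $ i - P $ i)) = complex_of_real t"
    if x: "x \<in> X" "norm (x - P) < \<rho>" for x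
  proof -
    obtain t where t: "\<bar>t\<bar> < e" "\<bar>t\<bar> < r1" "\<gamma> t = x"
      using \<rho>(2) x by auto
    have t_ball: "complex_of_real t \<in> ball 0 r1"
      using t(2) by simp
    then have "complex_of_real t \<in> ball 0 d"
      using T(2) by blast
    then have "complex_of_real (x $ i - P $ i) = S (complex_of_real t)"
      using S(5) t(3) by simp
    then show ?thesis
      using T(4) t_ball t by auto
  qed
  moreover have "T 0 = 0"
    using T(1) T(4)[rule_format, of 0] S(3) by simp
  moreover have "T holomorphic_on ball 0 (min \<rho> r1)"
    using T(3) by (rule holomorphic_on_subset) auto
  ultimately show ?thesis
    using \<rho>(1) T(1) by (intro exI[of _ i] exI[of _ "min \<rho> r1"] exI[of _ T]) auto
qed

lemma analytic_param_holomorphic_in_coordinate: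
  assumes par: "analytic_param X P \<gamma> e"
  shows "\<exists>i. \<forall>f. real_analytic_on (f \<circ> \<gamma>) {-e<..<e} \<longrightarrow> holomorphic_in_coordinate X f P i"
proof -
  obtain i r T where T: "r > 0" "T holomorphic_on ball 0 r" "T 0 = 0"
    "\<forall>x\<in>X. norm (x - P) < r \<longrightarrow>
       (\<exists>t. \<bar>t\<bar> < e \<and> \<gamma> t = x \<and> T (complex_of_real (x $ i - P $ i)) = complex_of_real t)"
    using analytic_param_coordinate_inverse[OF par] by blast
  have "holomorphic_in_coordinate X f P i" if an: "real_analytic_on (f \<circ> \<gamma>) {-e<..<e}" for f
  proof -
    obtain d \<Phi> where \<Phi>: "d > 0" "\<Phi> holomorphic_on ball 0 d"
      "\<And>t. \<bar>t\<bar> < d \<Longrightarrow> \<Phi> (complex_of_real t) = complex_of_real (f (\<gamma> t))"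
      using real_analytic_on_holomorphic_extension[OF an] par unfolding analytic_param_def by auto
    have "continuous (at 0) T"
      using holomorphic_on_imp_continuous_on[OF T(2)] T(1) by (simp add: continuous_on_eq_continuous_at)
    then obtain r' where r': "r' > 0" "\<forall>w. dist w 0 < r' \<longrightarrow> dist (T w) 0 < d"
      using \<Phi>(1) T(3) unfolding continuous_at_eps_delta by metis
    define \<rho> where "\<rho> = min r r'"
    have T_ball: "T ` ball 0 \<rho> \<subseteq> ball 0 d"
      using r'(2) by (auto simp: \<rho>_def dist_norm)
    have "T holomorphic_on ball 0 \<rho>"
      using T(2) by (rule holomorphic_on_subset) (auto simp: \<rho>_def)
    then have "(\<Phi> \<circ> T) holomorphic_on ball 0 \<rho>"
      using holomorphic_on_compose_gen[OF _ \<Phi>(2) T_ball] by blast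
    moreover have "complex_of_real (f x) = (\<Phi> \<circ> T) (complex_of_real (x $ i - P $ i))"
      if x: "x \<in> X" "norm (x - P) < \<rho>" for x
    proof -
      obtain t where t: "\<gamma> t = x" "T (complex_of_real (x $ i - P $ i)) = complex_of_real t"
        using T(4) x by (auto simp: \<rho>_def)
      have "complex_of_real (x $ i - P $ i) \<in> ball 0 \<rho>"
        using x(2) norm_coordinate_le[of x i P] by simp
      then have "complex_of_real t \<in> ball 0 d"
        using T_ball t(2) by (metis image_subset_iff)
      then have "\<bar>t\<bar> < d" by simp
      then show ?thesis using \<Phi>(3) t by simp
    qed
    moreover have "\<rho> > 0"
      using T(1) r'(1) by (simp add: \<rho>_def)
    ultimately show ?thesis
      unfolding holomorphic_in_coordinate_def by blast
  qed
  then show ?thesis by blast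
qed

lemma holomorphic_in_coordinate_compose:
  assumes f: "holomorphic_in_coordinate X f P j"
    and xj: "holomorphic_in_coordinate X (\<lambda>x. x $ j) P i" and P: "P \<in> X"
  shows "holomorphic_in_coordinate X f P i"
proof -
  obtain r1 K where K: "r1 > 0" "K holomorphic_on ball 0 r1"
    "\<forall>x\<in>X. norm (x - P) < r1 \<longrightarrow> complex_of_real (f x) = K (complex_of_real (x $ j - P $ j))"
    using f unfolding holomorphic_in_coordinate_def by blast
  obtain r2 C where C: "r2 > 0" "C holomorphic_on ball 0 r2"
    "\<forall>x\<in>X. norm (x - P) < r2 \<longrightarrow> complex_of_real (x $ j) = C (complex_of_real (x $ i - P $ i))"
    using xj unfolding holomorphic_in_coordinate_def by blast
  define D where "D w = C w - complex_of_real (P $ j)" for w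
  have D_holo: "D holomorphic_on ball 0 r2"
    unfolding D_def using C(2) by (intro holomorphic_intros)
  have "D 0 = 0"
    using C(1,3) P by (simp add: D_def)
  moreover have "continuous (at 0) D"
    using holomorphic_on_imp_continuous_on[OF D_holo] C(1) by (simp add: continuous_on_eq_continuous_at)
  ultimately obtain r3 where r3: "r3 > 0" "\<forall>w. dist w 0 < r3 \<longrightarrow> dist (D w) 0 < r1"
    using K(1) unfolding continuous_at_eps_delta by metis
  define \<rho> where "\<rho> = min r1 (min r2 r3)"
  have D_ball: "D ` ball 0 \<rho> \<subseteq> ball 0 r1"
    using r3(2) by (auto simp: \<rho>_def dist_norm)
  have "D holomorphic_on ball 0 \<rho>"
    using D_holo by (rule holomorphic_on_subset) (auto simp: \<rho>_def)
  then have "(K \<circ> D) holomorphic_on ball 0 \<rho>"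
    using holomorphic_on_compose_gen[OF _ K(2) D_ball] by blast
  moreover have "complex_of_real (f x) = (K \<circ> D) (complex_of_real (x $ i - P $ i))"
    if "x \<in> X" "norm (x - P) < \<rho>" for x
    using K(3) C(3) that by (simp add: \<rho>_def D_def)
  moreover have "\<rho> > 0"
    using K(1) C(1) r3(1) by (simp add: \<rho>_def)
  ultimately show ?thesis
    unfolding holomorphic_in_coordinate_def by blast
qed

lemma holomorphic_in_coordinate_diff:
  assumes "holomorphic_in_coordinate X f P i" "holomorphic_in_coordinate X g P i"
  shows "holomorphic_in_coordinate X (\<lambda>x. f x - g x) P i"
proof -
  obtain r1 K1 r2 K2 where K: "r1 > 0" "K1 holomorphic_on ball 0 r1"
    "\<forall>x\<in>X. norm (x - P) < r1 \<longrightarrow> complex_of_real (f x) = K1 (complex_of_real (x $ i - P $ i))"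
    "r2 > 0" "K2 holomorphic_on ball 0 r2"
    "\<forall>x\<in>X. norm (x - P) < r2 \<longrightarrow> complex_of_real (g x) = K2 (complex_of_real (x $ i - P $ i))"
    using assms unfolding holomorphic_in_coordinate_def by blast
  have "(\<lambda>w. K1 w - K2 w) holomorphic_on ball 0 (min r1 r2)"
    by (intro holomorphic_intros holomorphic_on_subset[OF K(2)] holomorphic_on_subset[OF K(5)]) auto
  moreover have "complex_of_real (f x - g x) = K1 (complex_of_real (x $ i - P $ i)) - K2 (complex_of_real (x $ i - P $ i))"
    if "x \<in> X" "norm (x - P) < min r1 r2" for x
  proof -
    have "complex_of_real (f x) = K1 (complex_of_real (x $ i - P $ i))"
      "complex_of_real (g x) = K2 (complex_of_real (x $ i - P $ i))"
      using K(3,6) that by auto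
    then show ?thesis by (simp only: of_real_diff)
  qed
  ultimately show ?thesis
    unfolding holomorphic_in_coordinate_def using K(1,4)
    by (intro exI[of _ "min r1 r2"] exI[of _ "\<lambda>w. K1 w - K2 w"]) auto
qed

lemma holomorphic_in_coordinate_lipschitz:
  assumes "holomorphic_in_coordinate X f P i" "P \<in> X"
  shows "\<exists>M \<rho>. \<rho> > 0 \<and> (\<forall>x\<in>X. norm (x - P) < \<rho> \<longrightarrow> \<bar>f x - f P\<bar> \<le> M * \<bar>x $ i - P $ i\<bar>)"
proof -
  obtain r K where K: "r > 0" "K holomorphic_on ball 0 r"
    "\<forall>x\<in>X. norm (x - P) < r \<longrightarrow> complex_of_real (f x) = K (complex_of_real (x $ i - P $ i))"
    using assms(1) unfolding holomorphic_in_coordinate_def by blast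
  have "(K has_field_derivative deriv K 0) (at 0)"
    using holomorphic_derivI[OF K(2) open_ball, of 0] K(1) by simp
  then obtain M r' where r': "r' > 0" "\<And>w. norm (w - 0) < r' \<Longrightarrow> norm (K w - K 0) \<le> M * norm (w - 0)"
    using has_derivative_imp_local_lipschitz[of K _ 0] unfolding has_field_derivative_def by metis
  have "\<bar>f x - f P\<bar> \<le> M * \<bar>x $ i - P $ i\<bar>" if "x \<in> X" "norm (x - P) < min r r'" for x
  proof -
    have "complex_of_real (f x - f P) = K (complex_of_real (x $ i - P $ i)) - K 0"
      using K(1,3) that assms(2) by simp
    then have "\<bar>f x - f P\<bar> = norm (K (complex_of_real (x $ i - P $ i)) - K 0)"
      by (metis norm_of_real)
    also have "\<dots> \<le> M * norm (complex_of_real (x $ i - P $ i))"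
      using r'(2) norm_coordinate_le[of x i P] that(2) by simp
    finally show ?thesis by (simp only: norm_of_real)
  qed
  then show ?thesis
    using K(1) r'(1) by (metis min_less_iff_conj)
qed

lemma coordinate_bounds_norm:
  fixes P :: "real^'n"
  assumes "\<And>k. holomorphic_in_coordinate X (\<lambda>x. x $ k) P i" "P \<in> X"
  shows "\<exists>M \<rho>. \<rho> > 0 \<and> (\<forall>x\<in>X. norm (x - P) < \<rho> \<longrightarrow> norm (x - P) \<le> M * \<bar>x $ i - P $ i\<bar>)"
proof -
  obtain M \<rho> where M: "\<And>k. \<rho> k > 0 \<and>
      (\<forall>x\<in>X. norm (x - P) < \<rho> k \<longrightarrow> \<bar>x $ k - P $ k\<bar> \<le> M k * \<bar>x $ i - P $ i\<bar>)"
    using holomorphic_in_coordinate_lipschitz[OF assms(1) assms(2)] by metis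
  define \<rho>0 where "\<rho>0 = Min (range \<rho>)"
  have "\<rho>0 > 0"
    unfolding \<rho>0_def using M by (simp add: Min_gr_iff)
  moreover have "norm (x - P) \<le> (\<Sum>k\<in>UNIV. \<bar>M k\<bar>) * \<bar>x $ i - P $ i\<bar>"
    if "x \<in> X" "norm (x - P) < \<rho>0" for x
  proof -
    have "norm (x - P) \<le> (\<Sum>k\<in>UNIV. \<bar>(x - P) $ k\<bar>)"
      by (rule norm_le_l1_cart)
    also have "\<dots> \<le> (\<Sum>k\<in>UNIV. \<bar>M k\<bar> * \<bar>x $ i - P $ i\<bar>)"
    proof (rule sum_mono)
      fix k
      have "norm (x - P) < \<rho> k"
        using that(2) Min_le[of "range \<rho>" "\<rho> k"] by (simp add: \<rho>0_def)
      then have "\<bar>x $ k - P $ k\<bar> \<le> M k * \<bar>x $ i - P $ i\<bar>"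
        using M that(1) by blast
      also have "\<dots> \<le> \<bar>M k\<bar> * \<bar>x $ i - P $ i\<bar>"
        by (intro mult_right_mono) auto
      finally show "\<bar>(x - P) $ k\<bar> \<le> \<bar>M k\<bar> * \<bar>x $ i - P $ i\<bar>" by simp
    qed
    finally show ?thesis by (simp add: sum_distrib_right)
  qed
  ultimately show ?thesis by blast
qed

lemma dominates_power_from_coordinate:
  assumes "c > 0" "\<rho> > 0" "\<forall>x\<in>X. norm (x - P) < \<rho> \<longrightarrow> c * \<bar>x $ i - P $ i\<bar> ^ n \<le> f x"
    and "\<And>k. holomorphic_in_coordinate X (\<lambda>x. x $ k) P i" "P \<in> X"
  shows "dominates_power X f P n"
proof -
  obtain M \<rho>' where M: "\<rho>' > 0" "\<forall>x\<in>X. norm (x - P) < \<rho>' \<longrightarrow> norm (x - P) \<le> M * \<bar>x $ i - P $ i\<bar>"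
    using coordinate_bounds_norm[OF assms(4,5)] by blast
  have "c / (\<bar>M\<bar> + 1) ^ n * norm (x - P) ^ n \<le> f x"
    if x: "x \<in> X" "norm (x - P) < min \<rho> \<rho>'" for x
  proof -
    have "norm (x - P) \<le> (\<bar>M\<bar> + 1) * \<bar>x $ i - P $ i\<bar>"
      using M(2) x by (fastforce intro: order_trans[OF _ mult_right_mono])
    then have "(norm (x - P) / (\<bar>M\<bar> + 1)) ^ n \<le> \<bar>x $ i - P $ i\<bar> ^ n"
      by (intro power_mono) (auto simp: divide_le_eq mult.commute)
    then have "c * (norm (x - P) / (\<bar>M\<bar> + 1)) ^ n \<le> c * \<bar>x $ i - P $ i\<bar> ^ n"
      using assms(1) by (rule mult_left_mono[OF _ less_imp_le])
    also have "\<dots> \<le> f x"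
      using assms(3) x by simp
    finally show ?thesis
      by (simp add: power_divide)
  qed
  then show ?thesis
    unfolding dominates_power_def using assms(1,2) M(1)
    by (intro exI[of _ "c / (\<bar>M\<bar> + 1) ^ n"] exI[of _ "min \<rho> \<rho>'"]) auto
qed

lemma holomorphic_order_lower_bound:
  assumes "K holomorphic_on ball 0 r" "r > 0" "K 0 = 0" "\<not> K constant_on ball 0 r"
  shows "\<exists>n c \<rho>. c > 0 \<and> \<rho> > 0 \<and> \<rho> \<le> r \<and> (\<forall>w. norm w < \<rho> \<longrightarrow> c * norm w ^ n \<le> norm (K w))"
proof -
  have centre: "0 \<in> ball (0::complex) r"
    using assms(2) by simp
  obtain g r1 n where g: "0 < n" "r1 > 0" "ball (0::complex) r1 \<subseteq> ball 0 r" "g holomorphic_on ball 0 r1"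
    "\<And>w. w \<in> ball 0 r1 \<Longrightarrow> K w = (w - 0) ^ n * g w" "\<And>w. w \<in> ball 0 r1 \<Longrightarrow> g w \<noteq> 0"
  proof (rule holomorphic_factor_zero_nonconstant[OF assms(1) open_ball connected_ball centre assms(3,4)])
    fix g r1 n
    assume "0 < n" "0 < r1" "ball (0::complex) r1 \<subseteq> ball 0 r" "g holomorphic_on ball 0 r1"
      "\<And>w. w \<in> ball 0 r1 \<Longrightarrow> K w = (w - 0) ^ n * g w" "\<And>w. w \<in> ball 0 r1 \<Longrightarrow> g w \<noteq> 0"
    then show thesis by (rule that)
  qed
  have g0: "g 0 \<noteq> 0"
    using g(2,6) by simp
  have "continuous (at 0) g"
    using holomorphic_on_imp_continuous_on[OF g(4)] g(2) by (simp add: continuous_on_eq_continuous_at)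
  then obtain r2 where r2: "r2 > 0" "\<forall>w. dist w 0 < r2 \<longrightarrow> dist (g w) (g 0) < norm (g 0) / 2"
    using g0 unfolding continuous_at_eps_delta by (metis half_gt_zero zero_less_norm_iff)
  have "norm (g 0) / 2 * norm w ^ n \<le> norm (K w)" if w: "norm w < min r (min r1 r2)" for w
  proof -
    have "norm (g 0) / 2 \<le> norm (g w)"
      using r2(2) w norm_triangle_ineq2[of "g 0" "g w"] by (force simp: dist_norm norm_minus_commute)
    then have "norm (g 0) / 2 * norm w ^ n \<le> norm (g w) * norm w ^ n"
      by (rule mult_right_mono) simp
    also have "\<dots> = norm (K w)"
      using g(5)[of w] w by (simp add: norm_mult norm_power)
    finally show ?thesis .
  qed
  then show ?thesis
    using g0 g(2) r2(1) assms(2)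
    by (intro exI[of _ n] exI[of _ "norm (g 0) / 2"] exI[of _ "min r (min r1 r2)"]) auto
qed

lemma holomorphic_in_coordinate_dominates_power:
  assumes hol: "holomorphic_in_coordinate X f P i" and coords: "\<And>k. holomorphic_in_coordinate X (\<lambda>x. x $ k) P i"
    and P: "P \<in> X" "f P = 0"
    and nonneg: "\<And>x. x \<in> X \<Longrightarrow> f x \<ge> 0" and limpt: "P islimpt {x \<in> X. f x \<noteq> 0}"
  shows "\<exists>n. dominates_power X f P n"
proof -
  obtain r K where K: "r > 0" "K holomorphic_on ball 0 r"
    "\<forall>x\<in>X. norm (x - P) < r \<longrightarrow> complex_of_real (f x) = K (complex_of_real (x $ i - P $ i))"
    using hol unfolding holomorphic_in_coordinate_def by blast
  have K0: "K 0 = 0"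
    using K(1,3) P by force
  have "\<not> K constant_on ball 0 r"
  proof
    assume "K constant_on ball 0 r"
    then have K_eq: "K w = 0" if "w \<in> ball 0 r" for w
      using K0 K(1) that unfolding constant_on_def by (metis centre_in_ball)
    obtain x where x: "x \<in> X" "f x \<noteq> 0" "dist x P < r"
      using limpt K(1) unfolding islimpt_approachable by blast
    then have near: "norm (x - P) < r"
      by (simp add: dist_norm)
    then have "complex_of_real (x $ i - P $ i) \<in> ball 0 r"
      unfolding mem_ball_0 using norm_coordinate_le[of x i P] by linarith
    from trans[OF K(3)[rule_format, OF x(1) near] K_eq[OF this]]
    have "complex_of_real (f x) = 0" .
    then show False using x(2) by simp
  qed
  then obtain n c \<rho> where c: "c > 0" "\<rho> > 0" "\<rho> \<le> r" "\<forall>w. norm w < \<rho> \<longrightarrow> c * norm w ^ n \<le> norm (K w)"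
    using holomorphic_order_lower_bound[OF K(2,1) K0] by blast
  have "c * \<bar>x $ i - P $ i\<bar> ^ n \<le> f x" if x: "x \<in> X" "norm (x - P) < \<rho>" for x
  proof -
    have "c * \<bar>x $ i - P $ i\<bar> ^ n \<le> norm (K (complex_of_real (x $ i - P $ i)))"
      using c(4) x(2) norm_coordinate_le[of x i P] by (metis norm_of_real order.strict_trans1)
    also have "\<dots> = f x"
      using K(3) x c(3) nonneg[OF x(1)] by (metis norm_of_real abs_of_nonneg order.strict_trans2)
    finally show ?thesis .
  qed
  then show ?thesis
    using dominates_power_from_coordinate[OF c(1,2) _ coords P(1)] by blast
qed

section \<open>Taylor approximation\<close>

lemma powser_tail_bound:
  fixes c :: "nat \<Rightarrow> 'a::{real_normed_field,banach}"
  assumes "summable (\<lambda>n. norm (c n) * s ^ n)" "s > 0" "norm w \<le> s"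
  shows "norm (\<Sum>n. c (n + N) * w ^ (n + N)) \<le> (\<Sum>n. norm (c (n + N)) * s ^ n) * norm w ^ N"
proof -
  have "summable (\<lambda>n. norm (c (n + N)) * s ^ (n + N) / s ^ N)"
    using assms(1) by (intro summable_divide) (subst summable_iff_shift)
  then have major: "summable (\<lambda>n. norm (c (n + N)) * s ^ n)"
    using assms(2) by (simp add: power_add)
  have term_le: "norm (c (n + N) * w ^ (n + N)) \<le> norm w ^ N * (norm (c (n + N)) * s ^ n)" for n
  proof -
    have "norm w ^ n \<le> s ^ n"
      using assms(3) by (intro power_mono) auto
    then have "norm (c (n + N)) * norm w ^ n \<le> norm (c (n + N)) * s ^ n"
      by (rule mult_left_mono) simp
    then have "norm w ^ N * (norm (c (n + N)) * norm w ^ n) \<le> norm w ^ N * (norm (c (n + N)) * s ^ n)"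
      by (rule mult_left_mono) simp
    then show ?thesis
      by (simp add: norm_mult norm_power power_add mult_ac)
  qed
  have summable_terms: "summable (\<lambda>n. norm (c (n + N) * w ^ (n + N)))"
    by (rule summable_comparison_test[OF _ summable_mult[OF major]]) (use term_le in auto)
  have "norm (\<Sum>n. c (n + N) * w ^ (n + N)) \<le> (\<Sum>n. norm (c (n + N) * w ^ (n + N)))"
    using summable_terms by (rule summable_norm)
  also have "\<dots> \<le> (\<Sum>n. norm w ^ N * (norm (c (n + N)) * s ^ n))"
    using term_le summable_terms summable_mult[OF major] by (rule suminf_le)
  also have "\<dots> = (\<Sum>n. norm (c (n + N)) * s ^ n) * norm w ^ N"
    using major by (simp add: suminf_mult mult.commute)
  finally show ?thesis .
qed

lemma holomorphic_taylor_remainder_bound: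
  assumes "f holomorphic_on ball 0 r" "r > 0"
  shows "\<exists>M. \<forall>w. norm w < r / 2 \<longrightarrow>
     norm (f w - (\<Sum>n<N. (deriv ^^ n) f 0 / fact n * w ^ n)) \<le> M * norm w ^ N"
proof -
  define c where "c n = (deriv ^^ n) f 0 / fact n" for n
  have sums: "(\<lambda>n. c n * w ^ n) sums f w" if "w \<in> ball 0 r" for w
    using holomorphic_power_series[OF assms(1) that] by (simp add: c_def)
  have "summable (\<lambda>n. c n * complex_of_real (3 * r / 4) ^ n)"
    using sums[of "complex_of_real (3 * r / 4)"] assms(2) by (auto intro: sums_summable)
  then have "summable (\<lambda>n. norm (c n * complex_of_real (r / 2) ^ n))"
    by (rule powser_insidea) (use assms(2) in simp)
  then have major: "summable (\<lambda>n. norm (c n) * (r / 2) ^ n)"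
    using assms(2) by (simp add: norm_mult norm_power)
  have "norm (f w - (\<Sum>n<N. c n * w ^ n)) \<le> (\<Sum>n. norm (c (n + N)) * (r / 2) ^ n) * norm w ^ N"
    if "norm w < r / 2" for w
  proof -
    have "w \<in> ball 0 r"
      unfolding mem_ball_0 using that norm_ge_zero[of w] by linarith
    then have "(\<lambda>n. c (n + N) * w ^ (n + N)) sums (f w - (\<Sum>n<N. c n * w ^ n))"
      using sums by (subst sums_iff_shift) auto
    then have "f w - (\<Sum>n<N. c n * w ^ n) = (\<Sum>n. c (n + N) * w ^ (n + N))"
      by (simp add: sums_iff)
    then show ?thesis
      using powser_tail_bound[OF major _ less_imp_le[OF that], of N] assms(2) by simp
  qed
  then show ?thesis
    unfolding c_def by blast
qed

lemma holomorphic_in_coordinate_polynomial_approx: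
  assumes "holomorphic_in_coordinate X f P i"
  shows "\<exists>h. real_polynomial_function h \<and> vanishes_to_order X (\<lambda>x. f x - h x) P N"
proof -
  obtain r K where K: "r > 0" "K holomorphic_on ball 0 r"
    "\<forall>x\<in>X. norm (x - P) < r \<longrightarrow> complex_of_real (f x) = K (complex_of_real (x $ i - P $ i))"
    using assms unfolding holomorphic_in_coordinate_def by blast
  define c where "c n = (deriv ^^ n) K 0 / fact n" for n
  obtain M where M: "\<And>w. norm w < r / 2 \<Longrightarrow> norm (K w - (\<Sum>n<N. c n * w ^ n)) \<le> M * norm w ^ N"
    using holomorphic_taylor_remainder_bound[OF K(2,1)] unfolding c_def by blast
  define h where "h x = (\<Sum>n<N. Re (c n) * (x $ i - P $ i) ^ n)" for x
  have "real_polynomial_function h"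
    unfolding h_def using bounded_linear_vec_nth[of i]
    by (intro real_polynomial_function_sum real_polynomial_function_power real_polynomial_function_diff
        real_polynomial_function.intros(4)) auto
  moreover have "\<bar>f x - h x\<bar> \<le> max M 0 * norm (x - P) ^ N"
    if x: "x \<in> X" "norm (x - P) < r / 2" for x
  proof -
    define s where "s = x $ i - P $ i"
    have s: "\<bar>s\<bar> \<le> norm (x - P)"
      unfolding s_def using component_le_norm_cart[of "x - P" i] by simp
    have "norm (x - P) < r"
      using x(2) norm_ge_zero[of "x - P"] by linarith
    then have "complex_of_real (f x) = K (complex_of_real s)"
      using K(3) x(1) unfolding s_def by blast
    then have "Re (K (complex_of_real s)) = f x"
      by (metis Re_complex_of_real)
    moreover have "Re (c n * complex_of_real s ^ n) = Re (c n) * s ^ n" for n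
      by (simp flip: of_real_power)
    ultimately have "\<bar>f x - h x\<bar> = \<bar>Re (K (complex_of_real s) - (\<Sum>n<N. c n * complex_of_real s ^ n))\<bar>"
      by (simp add: Re_sum h_def s_def)
    also have "\<dots> \<le> norm (K (complex_of_real s) - (\<Sum>n<N. c n * complex_of_real s ^ n))"
      by (rule abs_Re_le_cmod)
    also have "\<dots> \<le> M * \<bar>s\<bar> ^ N"
      using M[of "complex_of_real s"] x(2) s by simp
    also have "\<dots> \<le> max M 0 * norm (x - P) ^ N"
      using s by (intro mult_mono power_mono) auto
    finally show ?thesis .
  qed
  ultimately show ?thesis
    unfolding vanishes_to_order_def using K(1) by (metis half_gt_zero)
qed

section \<open>The functions of the ring A\<close>

lemma analytic_near_holomorphic_in_coordinate:
  assumes "analytic_near X f P"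
  shows "\<exists>i. holomorphic_in_coordinate X f P i \<and> (\<forall>k. holomorphic_in_coordinate X (\<lambda>x. x $ k) P i)"
proof -
  obtain \<gamma> e where par: "analytic_param X P \<gamma> e" and an: "real_analytic_on (f \<circ> \<gamma>) {-e<..<e}"
    using assms unfolding analytic_near_def by blast
  obtain i where i: "\<forall>g. real_analytic_on (g \<circ> \<gamma>) {-e<..<e} \<longrightarrow> holomorphic_in_coordinate X g P i"
    using analytic_param_holomorphic_in_coordinate[OF par] by blast
  have "real_analytic_on ((\<lambda>x. x $ k) \<circ> \<gamma>) {-e<..<e}" for k
    using par by (simp add: analytic_param_def o_def)
  then show ?thesis
    using i an by blast
qed

lemma analytic_near_polynomial_approx:
  assumes "analytic_near X f P"
  shows "\<exists>h. real_polynomial_function h \<and> vanishes_to_order X (\<lambda>x. f x - h x) P N"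
  using analytic_near_holomorphic_in_coordinate[OF assms] holomorphic_in_coordinate_polynomial_approx
  by blast

lemma analytic_near_gap_dominates_power:
  assumes \<phi>: "analytic_near X \<phi> P" and \<psi>: "analytic_near X \<psi> P" and P: "P \<in> X"
    and cont: "continuous_on X \<phi>" "continuous_on X \<psi>" and le: "\<And>x. x \<in> X \<Longrightarrow> \<phi> x \<le> \<psi> x"
    and F: "finite F" and zeros: "\<And>x. x \<in> X \<Longrightarrow> \<psi> x = \<phi> x \<Longrightarrow> x \<in> F"
  shows "\<exists>k. dominates_power X (\<lambda>x. \<psi> x - \<phi> x) P k"
proof (cases "\<psi> P = \<phi> P")
  case False
  then have "\<psi> P - \<phi> P > 0"
    using le[OF P] by simp
  moreover have "continuous (at P within X) (\<lambda>x. \<psi> x - \<phi> x)"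
    using continuous_on_diff[OF cont(2,1)] P by (simp add: continuous_on_eq_continuous_within)
  ultimately show ?thesis
    using dominates_power_0 by blast
next
  case True
  obtain i where \<phi>_i: "holomorphic_in_coordinate X \<phi> P i"
    and coords: "\<And>k. holomorphic_in_coordinate X (\<lambda>x. x $ k) P i"
    using analytic_near_holomorphic_in_coordinate[OF \<phi>] by blast
  obtain j where \<psi>_j: "holomorphic_in_coordinate X \<psi> P j"
    using analytic_near_holomorphic_in_coordinate[OF \<psi>] by blast
  have gap: "holomorphic_in_coordinate X (\<lambda>x. \<psi> x - \<phi> x) P i"
    using holomorphic_in_coordinate_diff[OF holomorphic_in_coordinate_compose[OF \<psi>_j coords P] \<phi>_i] .
  have limpt: "P islimpt {x \<in> X. \<psi> x - \<phi> x \<noteq> 0}"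
  proof -
    obtain \<gamma> e where "analytic_param X P \<gamma> e"
      using \<phi> unfolding analytic_near_def by blast
    then have "P islimpt (X - F) \<union> F"
      by (rule islimpt_subset[OF analytic_param_islimpt]) auto
    then have "P islimpt (X - F)"
      using islimpt_Un islimpt_finite F by blast
    then show ?thesis
      by (rule islimpt_subset) (use zeros in auto)
  qed
  have "\<psi> P - \<phi> P = 0" "\<And>x. x \<in> X \<Longrightarrow> \<psi> x - \<phi> x \<ge> 0"
    using True le by auto
  from holomorphic_in_coordinate_dominates_power[OF gap coords P this limpt]
  show ?thesis .
qed

theorem lemma1p14:
  fixes I :: "(complex^'n \<Rightarrow> complex) set"
    and Ps :: "(real^'n) set"
    and \<phi> \<psi> :: "real^'n \<Rightarrow> real"
  assumes "nonsingular_affine_curve I"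
    and "compact (real_points I)" and "real_points I \<noteq> {}"
    and "finite Ps" and "Ps \<subseteq> real_points I"
    and "\<phi> \<in> ringA (real_points I) Ps" and "\<psi> \<in> ringA (real_points I) Ps"
    and "\<forall>x\<in>real_points I. \<phi> x \<le> \<psi> x"
    and "\<forall>x\<in>real_points I. \<psi> x = \<phi> x \<longrightarrow> x \<in> Ps"
  shows "\<exists>p. regular_fun I p \<and> (\<forall>x\<in>real_points I. \<phi> x \<le> p x \<and> p x \<le> \<psi> x)"
proof -
  define X where "X = real_points I"
  have cont: "continuous_on X \<phi>" "continuous_on X \<psi>"
    and an: "\<And>P. P \<in> Ps \<Longrightarrow> analytic_near X \<phi> P \<and> analytic_near X \<psi> P"
    using assms(6,7) by (auto simp: ringA_def X_def)
  have le: "\<And>x. x \<in> X \<Longrightarrow> \<phi> x \<le> \<psi> x" and zeros: "\<And>x. x \<in> X \<Longrightarrow> \<psi> x = \<phi> x \<Longrightarrow> x \<in> Ps"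
    using assms(8,9) by (auto simp: X_def)
  have "compact X"
    using assms(2) by (simp add: X_def)
  moreover have "\<exists>k. dominates_power X (\<lambda>x. \<psi> x - \<phi> x) P k" if P: "P \<in> Ps" for P
  proof -
    have "P \<in> X" using P assms(5) by (auto simp: X_def)
    with an[OF P] show ?thesis
      using analytic_near_gap_dominates_power[OF _ _ _ cont le assms(4) zeros] by blast
  qed
  moreover have "\<exists>h. real_polynomial_function h \<and> vanishes_to_order X (\<lambda>x. \<phi> x - h x) P N"
    if "P \<in> Ps" for P N
    using analytic_near_polynomial_approx an[OF that] by blast
  ultimately obtain p where "real_polynomial_function p" "\<forall>x\<in>X. \<phi> x \<le> p x \<and> p x \<le> \<psi> x"
    using polynomial_between[OF _ assms(4) cont le zeros] by blast
  then show ?thesis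
    using regular_fun_real_polynomial_function unfolding X_def by blast
qed

end
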